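(* Let $G=(V,E)$ be a finite simple undirected graph, consider a run of \textsc{1-2-MinGreedy} on $G$ producing $M$, and let $M^*$ be a maximum matching such that each component of $(V,M\cup M^* )$ with an edge is an edge of $M\cap M^*$ or an $M$-$M^*$-path. Then (a) each endpoint of an $M$-$M^*$-path is the target of at most three transfers; and (b) an endpoint $w$ is the target of exactly three transfers if and only if there is a step in which the current degree of $w$ drops from $3$ to $1$ through the removal of two incident $F$-edges, and a later step in which the current degree of $w$ drops from $1$ to $0$ through the removal of its last incident $F$-edge.
   Context: \textsc{1-2-MinGreedy}: starting with $M=\emptyset$ and until no edges remain in the current graph, if every node has current degree at least $3$ select an arbitrary edge $\{u,v\}$, otherwise select an arbitrary node $u$ of minimum non-zero current degree and an arbitrary neighbor $v$; add $\{u,v\}$ to $M$ and remove all edges incident with $u$ or $v$. An $M$-$M^*$-path is a component of $(V,M\cup M^* )$ that is an alternating path starting and ending with an $M^*$-edge, with $m\geq1$ edges of $M$ and $m+1$ edges of $M^*$; its endpoints are its two $M$-uncovered end nodes. $F=E\setminus(M\cup M^* )$. For an endpoint $w$, an edge $\{v,w\}\in F$ is a transfer from $v$ to $w$ if, in the step of the algorithm in which $v$ is matched, the current degree of $w$ drops to at most $1$. *)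

theory Defs
  imports Main
begin

definition simple_graph :: "'a set \<Rightarrow> 'a set set \<Rightarrow> bool" where
  "simple_graph V E \<longleftrightarrow> finite V \<and>
     (\<forall>e\<in>E. \<exists>u v. e = {u, v} \<and> u \<noteq> v \<and> u \<in> V \<and> v \<in> V)"

definition matching :: "'a set set \<Rightarrow> 'a set set \<Rightarrow> bool" where
  "matching E M \<longleftrightarrow> M \<subseteq> E \<and> (\<forall>e\<in>M. \<forall>f\<in>M. e \<noteq> f \<longrightarrow> e \<inter> f = {})"

definition maximum_matching :: "'a set set \<Rightarrow> 'a set set \<Rightarrow> bool" where
  "maximum_matching E M \<longleftrightarrow> matching E M \<and> (\<forall>N. matching E N \<longrightarrow> card N \<le> card M)"

definition deg :: "'a set set \<Rightarrow> 'a \<Rightarrow> nat" where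
  "deg H x = card {e\<in>H. x \<in> e}"

definition remove_step :: "'a set set \<Rightarrow> 'a set \<Rightarrow> 'a set set" where
  "remove_step H e = {f\<in>H. f \<inter> e = {}}"

(* current edge set before step i (0-based) of the run es *)
definition cur :: "'a set set \<Rightarrow> 'a set list \<Rightarrow> nat \<Rightarrow> 'a set set" where
  "cur E es i = foldl remove_step E (take i es)"

(* es is the sequence of edges selected by a run of 1-2-MinGreedy on (V,E). *)
definition min_greedy_run :: "'a set \<Rightarrow> 'a set set \<Rightarrow> 'a set list \<Rightarrow> bool" where
  "min_greedy_run V E es \<longleftrightarrow>
     (\<forall>i<length es.
        es ! i \<in> cur E es i \<and>
        ((\<exists>x\<in>V. 0 < deg (cur E es i) x \<and> deg (cur E es i) x < 3) \<longrightarrow>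
          (\<exists>u\<in>es ! i. 0 < deg (cur E es i) u \<and>
              (\<forall>x\<in>V. 0 < deg (cur E es i) x \<longrightarrow> deg (cur E es i) u \<le> deg (cur E es i) x))))
     \<and> cur E es (length es) = {}"

definition comp_verts :: "'a set set \<Rightarrow> 'a \<Rightarrow> 'a set" where
  "comp_verts H x = {y. (x, y) \<in> {(a, b). {a, b} \<in> H}\<^sup>*}"

definition comp_edges :: "'a set set \<Rightarrow> 'a \<Rightarrow> 'a set set" where
  "comp_edges H x = {e\<in>H. e \<subseteq> comp_verts H x}"

definition path_edges :: "'a list \<Rightarrow> 'a set set" where
  "path_edges xs = {{xs ! i, xs ! Suc i} | i. Suc i < length xs}"

definition alt_path :: "'a set set \<Rightarrow> 'a set set \<Rightarrow> 'a list \<Rightarrow> bool" where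
  "alt_path M Ms xs \<longleftrightarrow> distinct xs \<and> (\<exists>m\<ge>1. length xs = 2 * m + 2) \<and>
     (\<forall>i. Suc i < length xs \<longrightarrow>
        (even i \<longrightarrow> {xs ! i, xs ! Suc i} \<in> Ms - M) \<and>
        (odd i \<longrightarrow> {xs ! i, xs ! Suc i} \<in> M - Ms))"

definition MMs_path :: "'a set set \<Rightarrow> 'a set set \<Rightarrow> 'a list \<Rightarrow> bool" where
  "MMs_path M Ms xs \<longleftrightarrow> alt_path M Ms xs \<and>
     comp_verts (M \<union> Ms) (hd xs) = set xs \<and> comp_edges (M \<union> Ms) (hd xs) = path_edges xs"

definition MMs_endpoint :: "'a set set \<Rightarrow> 'a set set \<Rightarrow> 'a \<Rightarrow> bool" where
  "MMs_endpoint M Ms w \<longleftrightarrow> (\<exists>xs. MMs_path M Ms xs \<and> (w = hd xs \<or> w = last xs))"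

definition good_components :: "'a set \<Rightarrow> 'a set set \<Rightarrow> 'a set set \<Rightarrow> bool" where
  "good_components V M Ms \<longleftrightarrow>
     (\<forall>x\<in>V. (\<exists>e\<in>M \<union> Ms. x \<in> e) \<longrightarrow>
        (\<exists>e\<in>M \<inter> Ms. comp_edges (M \<union> Ms) x = {e}) \<or>
        (\<exists>xs. MMs_path M Ms xs \<and> x \<in> set xs))"

(* {v,w} \<in> F is a transfer from v to w: in the step in which v is matched,
   the current degree of w drops to at most 1 *)
definition transfer :: "'a set set \<Rightarrow> 'a set list \<Rightarrow> 'a set set \<Rightarrow> 'a \<Rightarrow> 'a \<Rightarrow> bool" where
  "transfer E es Ms v w \<longleftrightarrow> {v, w} \<in> E - (set es \<union> Ms) \<and>
     (\<exists>i<length es. v \<in> es ! i \<and>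
        deg (cur E es (Suc i)) w < deg (cur E es i) w \<and> deg (cur E es (Suc i)) w \<le> 1)"

end

theory Submission
  imports Defs
begin

text \<open>An endpoint \<open>w\<close> of an \<open>M\<close>-\<open>M\<^sup>*\<close>-path is never covered by \<open>M\<close>, so a selected edge
  \<open>{a, b}\<close> removes at most the two edges \<open>{w, a}\<close>, \<open>{w, b}\<close> at \<open>w\<close>, and a transfer edge \<open>{v, w}\<close>
  disappears exactly in the step matching \<open>v\<close>. Hence every transfer edge is still present at the
  first step after which \<open>w\<close> has degree at most 1, and at that step \<open>w\<close> has at most \<open>1 + 2\<close>
  incident edges. Three transfers therefore fill all three edges at \<open>w\<close> in that step: two of them
  are removed there (degree 3 to 1), the last one later (degree 1 to 0). Conversely, each
  \<open>F\<close>-edge removed at \<open>w\<close> in such a step is a transfer.\<close>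

lemma foldl_remove_step:
  "foldl remove_step H fs = {e \<in> H. \<forall>f\<in>set fs. e \<inter> f = {}}"
  by (induction fs arbitrary: H) (auto simp: remove_step_def)

lemma mem_cur_iff: "e \<in> cur E es i \<longleftrightarrow> e \<in> E \<and> (\<forall>f\<in>set (take i es). e \<inter> f = {})"
  by (simp add: cur_def foldl_remove_step)

lemma cur_subset: "cur E es i \<subseteq> E"
  by (auto simp: mem_cur_iff)

lemma cur_antimono: "i \<le> j \<Longrightarrow> cur E es j \<subseteq> cur E es i"
  using set_take_subset_set_take by (fastforce simp: mem_cur_iff)

lemma mem_cur_diff_cur_Suc:
  "e \<in> cur E es i - cur E es (Suc i) \<Longrightarrow> i < length es \<and> e \<inter> es ! i \<noteq> {}"
  by (cases "i < length es") (auto simp: mem_cur_iff take_Suc_conv_app_nth)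

lemma MMs_path_end_edge_not_in_M:
  assumes "alt_path M Ms xs" "Suc k < length xs" "w \<in> {xs ! k, xs ! Suc k}"
    and "w = hd xs \<or> w = last xs"
  shows "{xs ! k, xs ! Suc k} \<notin> M"
proof -
  obtain m where len: "length xs = 2 * m + 2" and dist: "distinct xs"
    using assms(1) by (auto simp: alt_path_def)
  obtain n where n: "n = 0 \<or> n = length xs - 1" and w: "w = xs ! n"
    using assms(4) len by (metis hd_conv_nth last_conv_nth list.size(3) zero_neq_numeral add_is_0)
  have "n = k \<or> n = Suc k"
    using assms(2,3) w n len nth_eq_iff_index_eq[OF dist] by auto
  then have "even k"
    using n len assms(2) by auto
  then show ?thesis
    using assms(1,2) by (auto simp: alt_path_def)
qed

lemma MMs_endpoint_unmatched:
  assumes "MMs_endpoint M Ms w"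
  shows "{w, x} \<notin> M"
proof
  assume wx: "{w, x} \<in> M"
  obtain xs where P: "MMs_path M Ms xs" and at_end: "w = hd xs \<or> w = last xs"
    using assms by (auto simp: MMs_endpoint_def)
  let ?H = "M \<union> Ms"
  have alt: "alt_path M Ms xs" using P by (simp add: MMs_path_def)
  then have "xs \<noteq> []" by (auto simp: alt_path_def)
  then have w_comp: "w \<in> comp_verts ?H (hd xs)"
    using P at_end by (auto simp: MMs_path_def)
  then have "x \<in> comp_verts ?H (hd xs)"
    using wx unfolding comp_verts_def by (auto intro: rtrancl_into_rtrancl)
  with w_comp have "{w, x} \<in> path_edges xs"
    using P wx by (auto simp: MMs_path_def comp_edges_def)
  then obtain k where "{w, x} = {xs ! k, xs ! Suc k}" "Suc k < length xs"
    by (auto simp: path_edges_def)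
  then show False
    using MMs_path_end_edge_not_in_M[OF alt _ _ at_end] wx by (metis insertI1)
qed

lemma exists_leaving_step:
  assumes "P i" "\<not> P n" "i \<le> n"
  shows "\<exists>j\<ge>i. j < n \<and> P j \<and> \<not> P (Suc j)"
  using assms
proof (induction n)
  case (Suc n)
  then show ?case by (cases "P n") (force simp: le_Suc_eq intro: less_SucI)+
qed simp

locale greedy_run =
  fixes V :: "'a set" and E :: "'a set set" and es :: "'a set list"
  assumes simple: "simple_graph V E" and run: "min_greedy_run V E es"
begin

lemma finite_edges: "finite E"
proof (rule finite_subset)
  show "E \<subseteq> Pow V" using simple by (auto simp: simple_graph_def)
  show "finite (Pow V)" using simple by (simp add: simple_graph_def)
qed

lemma edge_doubleton: "e \<in> E \<Longrightarrow> \<exists>a b. e = {a, b} \<and> a \<noteq> b"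
  using simple unfolding simple_graph_def by blast

lemma selected_in_cur: "i < length es \<Longrightarrow> es ! i \<in> cur E es i"
  using run by (simp add: min_greedy_run_def)

lemma selected_disjoint:
  assumes "k < i" "i < length es"
  shows "es ! i \<inter> es ! k = {}"
proof -
  have "es ! k \<in> set (take i es)"
    using assms by (auto simp: in_set_conv_nth)
  then show ?thesis
    using selected_in_cur[OF assms(2)] by (auto simp: mem_cur_iff)
qed

lemma card_selected: "i < length es \<Longrightarrow> card (es ! i) = 2"
  using selected_in_cur cur_subset edge_doubleton by (metis card_2_iff subsetD)

lemma MMs_endpoint_not_selected:
  assumes "MMs_endpoint (set es) Ms w" "f \<in> set es"
  shows "w \<notin> f"
proof
  assume "w \<in> f"
  moreover obtain a b where "f = {a, b}"
    using assms(2) selected_in_cur cur_subset edge_doubleton by (metis in_set_conv_nth subsetD)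
  ultimately obtain x where "f = {w, x}"
    by auto
  then show False
    using MMs_endpoint_unmatched[OF assms(1)] assms(2) by simp
qed

lemma cur_empty: "length es \<le> i \<Longrightarrow> cur E es i = {}"
  using run cur_antimono[of "length es" i E es] by (auto simp: min_greedy_run_def)

end

locale unmatched_vertex = greedy_run +
  fixes Ms :: "'a set set" and w :: 'a
  assumes unmatched: "\<forall>f\<in>set es. w \<notin> f"
begin

definition incident :: "nat \<Rightarrow> 'a set set" where
  "incident i = {e \<in> cur E es i. w \<in> e}"

definition removed :: "nat \<Rightarrow> 'a set set" where
  "removed i = {e \<in> cur E es i - cur E es (Suc i). w \<in> e}"

definition F :: "'a set set" where
  "F = E - (set es \<union> Ms)"

definition transfer_edges :: "'a set set" where
  "transfer_edges = (\<lambda>v. {v, w}) ` {v. transfer E es Ms v w}"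

lemma finite_incident: "finite (incident i)"
  using finite_edges cur_subset[of E es i] by (auto simp: incident_def intro: finite_subset)

lemma deg_eq_card_incident: "deg (cur E es i) w = card (incident i)"
  by (simp add: deg_def incident_def)

lemma incident_antimono: "i \<le> j \<Longrightarrow> incident j \<subseteq> incident i"
  using cur_antimono[of i j] by (auto simp: incident_def)

lemma removed_eq_incident_diff: "removed i = incident i - incident (Suc i)"
  by (auto simp: removed_def incident_def)

lemma deg_step: "deg (cur E es i) w = deg (cur E es (Suc i)) w + card (removed i)"
proof -
  have "incident i = incident (Suc i) \<union> removed i"
    using incident_antimono[of i "Suc i"] by (auto simp: removed_eq_incident_diff)
  moreover have "finite (removed i)"
    using finite_incident by (simp add: removed_eq_incident_diff)
  moreover have "incident (Suc i) \<inter> removed i = {}"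
    by (auto simp: removed_eq_incident_diff)
  ultimately show ?thesis
    using finite_incident by (simp add: deg_eq_card_incident card_Un_disjoint)
qed

lemma removed_edge_form:
  assumes "e \<in> removed i"
  shows "i < length es \<and> (\<exists>x\<in>es ! i. e = {w, x})"
proof -
  have i: "i < length es" and "e \<inter> es ! i \<noteq> {}" "w \<in> e" "e \<in> E"
    using assms mem_cur_diff_cur_Suc cur_subset[THEN subsetD] by (auto simp: removed_def)
  moreover have "w \<notin> es ! i" using unmatched i by simp
  ultimately show ?thesis using edge_doubleton by fastforce
qed

lemma card_removed: "card (removed i) \<le> 2"
proof (cases "i < length es")
  case True
  then have fin: "finite (es ! i)"
    using card_selected card.infinite by fastforce
  have "removed i \<subseteq> (\<lambda>x. {w, x}) ` (es ! i)"
    using removed_edge_form by blast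
  then have "card (removed i) \<le> card ((\<lambda>x. {w, x}) ` (es ! i))"
    using fin by (simp add: card_mono)
  also have "\<dots> \<le> card (es ! i)"
    using fin by (rule card_image_le)
  finally show ?thesis
    using card_selected[OF True] by simp
next
  case False
  then have "removed i = {}"
    using removed_edge_form by blast
  then show ?thesis by simp
qed

lemma removed_nonempty_deg_less:
  "removed i \<noteq> {} \<Longrightarrow> deg (cur E es (Suc i)) w < deg (cur E es i) w"
  using deg_step[of i] finite_incident[of i] by (simp add: removed_eq_incident_diff card_gt_0_iff)

lemma transfer_removed:
  assumes "transfer E es Ms v w"
  obtains i where "i < length es" "{v, w} \<in> removed i" "deg (cur E es (Suc i)) w \<le> 1"
proof -
  obtain i where i: "i < length es" "v \<in> es ! i" "deg (cur E es (Suc i)) w \<le> 1"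
    and vw: "{v, w} \<in> E"
    using assms by (auto simp: transfer_def)
  have "{v, w} \<inter> f = {}" if f: "f \<in> set (take i es)" for f
  proof -
    obtain k where k: "k < i" "f = es ! k"
      using f i(1) by (auto simp: in_set_conv_nth)
    then have "v \<notin> f"
      using selected_disjoint[OF k(1) i(1)] i(2) by blast
    moreover have "w \<notin> f"
      using unmatched k i(1) by simp
    ultimately show ?thesis by simp
  qed
  then have "{v, w} \<in> cur E es i"
    using vw by (simp add: mem_cur_iff)
  moreover have "{v, w} \<notin> cur E es (Suc i)"
    using i by (auto simp: mem_cur_iff take_Suc_conv_app_nth)
  ultimately show ?thesis
    using that i by (simp add: removed_def)
qed

lemma transfer_edges_subset_F: "transfer_edges \<subseteq> F"
  by (auto simp: transfer_edges_def transfer_def F_def insert_commute)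

lemma card_transfer_edges: "card transfer_edges = card {v. transfer E es Ms v w}"
  unfolding transfer_edges_def
  by (rule card_image) (auto simp: inj_on_def doubleton_eq_iff)

lemma finite_transfer_edges: "finite transfer_edges"
  using transfer_edges_subset_F finite_edges by (auto simp: F_def intro: finite_subset)

lemma removed_subset_transfer_edges:
  assumes "removed i \<subseteq> F" "deg (cur E es (Suc i)) w \<le> 1"
  shows "removed i \<subseteq> transfer_edges"
proof
  fix e assume e: "e \<in> removed i"
  then obtain x where i: "i < length es" and x: "x \<in> es ! i" "e = {x, w}"
    using removed_edge_form by (auto simp: insert_commute)
  have "transfer E es Ms x w"
    unfolding transfer_def
    using assms e i x removed_nonempty_deg_less[of i] by (auto simp: F_def removed_def)
  then show "e \<in> transfer_edges"
    using x by (auto simp: transfer_edges_def)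
qed

definition first_low_step :: nat where
  "first_low_step = (LEAST i. deg (cur E es (Suc i)) w \<le> 1)"

lemma first_low_step: "deg (cur E es (Suc first_low_step)) w \<le> 1"
proof -
  have "deg (cur E es (Suc (length es))) w \<le> 1"
    by (simp add: cur_empty deg_def)
  then show ?thesis
    unfolding first_low_step_def by (rule LeastI)
qed

lemma first_low_step_le: "deg (cur E es (Suc i)) w \<le> 1 \<Longrightarrow> first_low_step \<le> i"
  unfolding first_low_step_def by (rule Least_le)

lemma transfer_edges_subset_incident: "transfer_edges \<subseteq> incident first_low_step"
proof
  fix e assume "e \<in> transfer_edges"
  then obtain v where "transfer E es Ms v w" "e = {v, w}"
    by (auto simp: transfer_edges_def)
  then obtain i where "{v, w} \<in> removed i" "deg (cur E es (Suc i)) w \<le> 1" "e = {v, w}"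
    using transfer_removed by metis
  then show "e \<in> incident first_low_step"
    using first_low_step_le incident_antimono removed_eq_incident_diff by blast
qed

lemma card_incident_first_low_step: "card (incident first_low_step) \<le> 3"
  using deg_step[of first_low_step] first_low_step card_removed[of first_low_step]
  by (simp add: deg_eq_card_incident)

theorem card_transfers_le_3: "card {v. transfer E es Ms v w} \<le> 3"
  using card_mono[OF finite_incident transfer_edges_subset_incident] card_incident_first_low_step
  by (simp add: card_transfer_edges)

lemma three_transfers_imp_steps:
  assumes "card {v. transfer E es Ms v w} = 3"
  shows "\<exists>i j. i < j \<and> j < length es \<and>
    deg (cur E es i) w = 3 \<and> deg (cur E es (Suc i)) w = 1 \<and> removed i \<subseteq> F \<and>
    deg (cur E es j) w = 1 \<and> deg (cur E es (Suc j)) w = 0 \<and> removed j \<subseteq> F"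
proof -
  let ?i = first_low_step
  have transfer_edges_eq: "transfer_edges = incident ?i"
    using card_subset_eq[OF finite_incident transfer_edges_subset_incident]
      card_incident_first_low_step assms card_mono[OF finite_incident transfer_edges_subset_incident]
    by (simp add: card_transfer_edges)
  then have deg_i: "deg (cur E es ?i) w = 3"
    using assms card_transfer_edges by (simp add: deg_eq_card_incident)
  then have deg_Suc_i: "deg (cur E es (Suc ?i)) w = 1"
    using deg_step[of ?i] first_low_step card_removed[of ?i] by simp
  have removed_i: "removed ?i \<subseteq> F"
    using transfer_edges_eq transfer_edges_subset_F by (auto simp: removed_eq_incident_diff)
  have "?i < length es"
    using deg_i cur_empty[of ?i] by (cases "?i < length es") (auto simp: deg_def)
  obtain e where e: "incident (Suc ?i) = {e}"
    using deg_Suc_i by (auto simp: deg_eq_card_incident card_1_singleton_iff)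
  then have "e \<in> F"
    using transfer_edges_eq incident_antimono[of ?i "Suc ?i"] transfer_edges_subset_F by auto
  have "e \<in> cur E es (Suc ?i)" "w \<in> e"
    using e by (auto simp: incident_def)
  moreover have "e \<notin> cur E es (length es)"
    by (simp add: cur_empty)
  ultimately obtain j where j: "Suc ?i \<le> j" "j < length es" "e \<in> cur E es j" "e \<notin> cur E es (Suc j)"
    using exists_leaving_step[of "\<lambda>j. e \<in> cur E es j" "Suc ?i" "length es"] \<open>?i < length es\<close>
    by auto
  have "incident j = {e}"
    using incident_antimono[OF j(1)] e j(3) \<open>w \<in> e\<close> by (auto simp: incident_def)
  moreover have "incident (Suc j) = {}"
    using incident_antimono[of j "Suc j"] calculation j(4) by (auto simp: incident_def)
  ultimately have "deg (cur E es j) w = 1" "deg (cur E es (Suc j)) w = 0" "removed j \<subseteq> F"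
    using \<open>e \<in> F\<close> by (simp_all add: deg_eq_card_incident removed_eq_incident_diff)
  then show ?thesis
    using j deg_i deg_Suc_i removed_i Suc_le_eq by blast
qed

lemma steps_imp_three_transfers:
  assumes "i < j"
    and "deg (cur E es i) w = 3" "deg (cur E es (Suc i)) w = 1" "removed i \<subseteq> F"
    and "deg (cur E es j) w = 1" "deg (cur E es (Suc j)) w = 0" "removed j \<subseteq> F"
  shows "card {v. transfer E es Ms v w} = 3"
proof -
  have "removed i \<union> removed j \<subseteq> transfer_edges"
    using assms removed_subset_transfer_edges by simp
  moreover have "card (removed i \<union> removed j) = 3"
  proof -
    have "removed i \<inter> removed j = {}"
      using incident_antimono[of "Suc i" j] assms(1) by (auto simp: removed_eq_incident_diff)
    moreover have "card (removed i) = 2" "card (removed j) = 1"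
      using assms deg_step[of i] deg_step[of j] by simp_all
    moreover have "finite (removed i)" "finite (removed j)"
      using finite_incident by (simp_all add: removed_eq_incident_diff)
    ultimately show ?thesis
      by (simp add: card_Un_disjoint)
  qed
  ultimately have "3 \<le> card transfer_edges"
    using card_mono[OF finite_transfer_edges] by metis
  then show ?thesis
    using card_transfers_le_3 by (simp add: card_transfer_edges)
qed

theorem card_transfers_eq_3_iff:
  "card {v. transfer E es Ms v w} = 3 \<longleftrightarrow>
    (\<exists>i j. i < j \<and> j < length es \<and>
       deg (cur E es i) w = 3 \<and> deg (cur E es (Suc i)) w = 1 \<and>
       {e \<in> cur E es i - cur E es (Suc i). w \<in> e} \<subseteq> E - (set es \<union> Ms) \<and>
       deg (cur E es j) w = 1 \<and> deg (cur E es (Suc j)) w = 0 \<and>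
       {e \<in> cur E es j - cur E es (Suc j). w \<in> e} \<subseteq> E - (set es \<union> Ms))"
  unfolding removed_def[symmetric] F_def[symmetric]
  using three_transfers_imp_steps steps_imp_three_transfers by blast

end

theorem lemma8:
  fixes V :: "'a set" and E :: "'a set set" and es :: "'a set list" and Ms :: "'a set set"
  assumes "simple_graph V E"
    and "min_greedy_run V E es"
    and "maximum_matching E Ms"
    and "good_components V (set es) Ms"
  shows "\<forall>w. MMs_endpoint (set es) Ms w \<longrightarrow>
           card {v. transfer E es Ms v w} \<le> 3 \<and>
           (card {v. transfer E es Ms v w} = 3 \<longleftrightarrow>
             (\<exists>i j. i < j \<and> j < length es \<and>
                deg (cur E es i) w = 3 \<and> deg (cur E es (Suc i)) w = 1 \<and>
                {e \<in> cur E es i - cur E es (Suc i). w \<in> e} \<subseteq> E - (set es \<union> Ms) \<and>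
                deg (cur E es j) w = 1 \<and> deg (cur E es (Suc j)) w = 0 \<and>
                {e \<in> cur E es j - cur E es (Suc j). w \<in> e} \<subseteq> E - (set es \<union> Ms)))"
proof -
  interpret greedy_run V E es
    using assms(1,2) by unfold_locales
  have unmatched: "unmatched_vertex V E es w" if "MMs_endpoint (set es) Ms w" for w
    using that assms(1,2) by unfold_locales (auto dest: MMs_endpoint_not_selected)
  show ?thesis
    by (intro allI impI conjI unmatched_vertex.card_transfers_le_3[of V]
        unmatched_vertex.card_transfers_eq_3_iff[of V] unmatched)
qed

end
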